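(* Let $A\in\mathcal{M}_n$ and $i,j\in\{1,\dots,n\}$. If $\alpha^A_i\equiv\alpha^A_j\equiv 0\pmod 2$ (so that $y^A_i,y^A_j$ lie in $H^2(M(A);\mathbb{Z})$) and $y^A_i\equiv y^A_j\pmod 2$ in $H^2(M(A);\mathbb{Z})$, then $i=j$.
   Context: Let $\mathcal{M}_n$ be the set of integral strictly upper triangular $n\times n$ matrices $A=(A^i_j)$ ($A^i_j$ is the $(i,j)$ entry, and $A^i_j=0$ for $i\ge j$). For $A\in\mathcal{M}_n$, $M(A)$ denotes the Bott manifold obtained as the quotient of $(S^3)^n$ ($S^3\subset\mathbb{C}^2$ the unit sphere) by the free $(S^1)^n$-action $(g_1,\dots,g_n)\cdot((z_1,w_1),\dots,(z_n,w_n))=\big(((\prod_{k<j}g_k^{-A^k_j})g_jz_j,\ g_jw_j)\big)_{j=1}^n$. Let $x^A_j\in H^2(M(A);\mathbb{Z})$ be the first Chern class of the line bundle obtained as the quotient of $(S^3)^n\times\mathbb{C}$ where $g$ acts on the $\mathbb{C}$-factor by $g_j^{-1}$. Put $\alpha^A_j=\sum_{i<j}A^i_jx^A_i$. Then $H^*(M(A);\mathbb{Z})=\mathbb{Z}[x^A_1,\dots,x^A_n]/((x^A_j)^2-\alpha^A_jx^A_j\mid j=1,\dots,n)$, and $x^A_1,\dots,x^A_n$ form a basis of $H^2(M(A);\mathbb{Z})$. Define $y^A_j=x^A_j-\tfrac12\alpha^A_j\in H^2(M(A);\mathbb{Q})$. *)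

theory Defs
  imports Complex_Main
begin

text \<open>An integral n x n matrix A is a function nat => nat => int, entry (i,j) being A i j,
  indices ranging over {1..n}. It is strictly upper triangular if A i j = 0 for i >= j.\<close>
definition strictly_upper :: "nat \<Rightarrow> (nat \<Rightarrow> nat \<Rightarrow> int) \<Rightarrow> bool" where
  "strictly_upper n A \<longleftrightarrow> (\<forall>i\<in>{1..n}. \<forall>j\<in>{1..n}. j \<le> i \<longrightarrow> A i j = 0)"

text \<open>Elements of H^2(M(A);Q) are represented by their coordinate vectors with respect to the
  basis x_1,...,x_n (coordinates indexed by {1..n}, zero outside).  H^2(M(A);Z) is the lattice
  of integral coordinate vectors.\<close>
type_synonym H2 = "nat \<Rightarrow> rat"

definition H2Z :: "nat \<Rightarrow> H2 set" where
  "H2Z n = {v. (\<forall>k. v k \<in> \<int>) \<and> (\<forall>k. k \<notin> {1..n} \<longrightarrow> v k = 0)}"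

definition xcls :: "nat \<Rightarrow> H2" where
  "xcls j = (\<lambda>k. if k = j then 1 else 0)"

definition alpha :: "nat \<Rightarrow> (nat \<Rightarrow> nat \<Rightarrow> int) \<Rightarrow> nat \<Rightarrow> H2" where
  "alpha n A j = (\<lambda>k. \<Sum>i\<in>{1..<j}. of_int (A i j) * xcls i k)"

definition ycls :: "nat \<Rightarrow> (nat \<Rightarrow> nat \<Rightarrow> int) \<Rightarrow> nat \<Rightarrow> H2" where
  "ycls n A j = (\<lambda>k. xcls j k - (1/2) * alpha n A j k)"

definition cong2 :: "nat \<Rightarrow> H2 \<Rightarrow> H2 \<Rightarrow> bool" where
  "cong2 n v w \<longleftrightarrow> v \<in> H2Z n \<and> w \<in> H2Z n \<and> (\<exists>z\<in>H2Z n. \<forall>k. v k - w k = 2 * z k)"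

end

theory Submission
  imports Defs
begin

text \<open>The coordinate of \<open>y\<^sub>j\<close> at \<open>x\<^sub>j\<close> is 1 and vanishes at every \<open>x\<^sub>k\<close> with \<open>k > j\<close>,
  because \<open>\<alpha>\<^sub>j\<close> only involves \<open>x\<^sub>k\<close> with \<open>k < j\<close>. So for \<open>i < j\<close> the \<open>x\<^sub>j\<close>-coordinate
  of \<open>y\<^sub>i - y\<^sub>j\<close> is \<open>-1\<close>, which is odd, and \<open>y\<^sub>i \<equiv> y\<^sub>j mod 2\<close> fails.\<close>

lemma alpha_eq_0_if_le: "j \<le> k \<Longrightarrow> alpha n A j k = 0"
  unfolding alpha_def xcls_def by (auto intro!: sum.neutral)

lemma ycls_diag: "ycls n A j j = 1"
  unfolding ycls_def by (simp add: alpha_eq_0_if_le xcls_def)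

lemma ycls_eq_0_if_less: "i < j \<Longrightarrow> ycls n A i j = 0"
  unfolding ycls_def by (simp add: alpha_eq_0_if_le xcls_def)

lemma Ints_double_neq_minus_one:
  fixes x :: "'a :: ring_char_0"
  assumes "x \<in> \<int>"
  shows "2 * x \<noteq> - 1"
proof
  assume "2 * x = - 1"
  moreover obtain m where "x = of_int m" using assms by (auto elim: Ints_cases)
  ultimately have "2 * m = - 1"
    by (metis of_int_eq_iff of_int_minus of_int_mult of_int_numeral of_int_1)
  then show False by presburger
qed

lemma cong2_sym: "cong2 n v w \<Longrightarrow> cong2 n w v"
proof -
  assume "cong2 n v w"
  then obtain z where z: "z \<in> H2Z n" "\<forall>k. v k - w k = 2 * z k"
    unfolding cong2_def by blast
  have "(\<lambda>k. - z k) \<in> H2Z n" using z(1) unfolding H2Z_def by auto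
  moreover have "\<forall>k. w k - v k = 2 * - z k" using z(2) by (simp add: algebra_simps)
  ultimately show "cong2 n w v" using \<open>cong2 n v w\<close> unfolding cong2_def by (metis (no_types))
qed

lemma not_cong2_ycls_if_less:
  assumes "i < j"
  shows "\<not> cong2 n (ycls n A i) (ycls n A j)"
proof
  assume "cong2 n (ycls n A i) (ycls n A j)"
  then obtain z where z: "z \<in> H2Z n" "\<forall>k. ycls n A i k - ycls n A j k = 2 * z k"
    unfolding cong2_def by blast
  have "2 * z j = - 1"
    using z(2) ycls_diag[of n A j] ycls_eq_0_if_less[OF assms] by (metis diff_0)
  moreover have "z j \<in> \<int>" using z(1) unfolding H2Z_def by blast
  ultimately show False using Ints_double_neq_minus_one by blast
qed

theorem lemma3p1:
  fixes n i j :: nat and A :: "nat \<Rightarrow> nat \<Rightarrow> int"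
  assumes "strictly_upper n A"
    and "i \<in> {1..n}" and "j \<in> {1..n}"
    and "cong2 n (alpha n A i) (\<lambda>_. 0)"
    and "cong2 n (alpha n A j) (\<lambda>_. 0)"
    and "cong2 n (ycls n A i) (ycls n A j)"
  shows "i = j"
  using assms(6) cong2_sym not_cong2_ycls_if_less by (metis linorder_neqE_nat)

end
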